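(* Let $d\ge1$ and let $f:\{0,1\}^n\to\{0,1\}$ be a depth-$d$ decision tree with polynomial representation $f=M_1+M_2+\cdots+M_t$ over $\mathbb{F}_2$. Let $M_i=x_{i_1}\cdots x_{i_{d'}}$ (with $d'\le d$) be a maximal monomial of $f$. Then for all $\xi_1,\dots,\xi_{d'}\in\{0,1\}$, the function $f_{|x_{i_1}\gets\xi_1,\dots,x_{i_{d'}}\gets\xi_{d'}}$ is a depth-$(d-1)$ decision tree.
   Context: A decision tree over $x_1,\dots,x_n$ is a rooted binary tree whose internal nodes are labeled by variables, each having a 0-child and a 1-child, leaves labeled $0$ or $1$; it computes a Boolean function by following from the root the $x_i$-child at a node labeled $x_i$; a depth-$d$ decision tree is a function computed by such a tree with every root-to-leaf path having at most $d$ edges. Every Boolean function has a unique representation as a sum over $\mathbb{F}_2$ of distinct monomials (products of distinct variables; the empty product is the constant $1$). A monomial $M_i$ of $f$ is maximal if no other monomial $M_j$ of $f$ contains all variables of $M_i$. $f_{|x_{i_1}\gets\xi_1,\dots}$ denotes the function obtained by substituting $x_{i_r}=\xi_r$. *)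

theory Defs
  imports Main
begin

datatype dtree = Leaf bool | Node nat dtree dtree

fun dt_eval :: "dtree \<Rightarrow> (nat \<Rightarrow> bool) \<Rightarrow> bool" where
  "dt_eval (Leaf b) x = b"
| "dt_eval (Node i t0 t1) x = (if x i then dt_eval t1 x else dt_eval t0 x)"

fun dt_depth :: "dtree \<Rightarrow> nat" where
  "dt_depth (Leaf b) = 0"
| "dt_depth (Node i t0 t1) = Suc (max (dt_depth t0) (dt_depth t1))"

fun dt_vars :: "dtree \<Rightarrow> nat set" where
  "dt_vars (Leaf b) = {}"
| "dt_vars (Node i t0 t1) = insert i (dt_vars t0 \<union> dt_vars t1)"

definition is_depth_dt :: "nat \<Rightarrow> nat \<Rightarrow> ((nat \<Rightarrow> bool) \<Rightarrow> bool) \<Rightarrow> bool" where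
  "is_depth_dt n d f \<longleftrightarrow> (\<exists>T. dt_vars T \<subseteq> {..<n} \<and> dt_depth T \<le> d \<and> dt_eval T = f)"

text \<open>M is the F_2 polynomial representation of f: a set of distinct monomials
  (each monomial = set of its variables, empty set = constant 1) whose sum over F_2 is f.\<close>
definition is_F2_poly_rep :: "nat \<Rightarrow> ((nat \<Rightarrow> bool) \<Rightarrow> bool) \<Rightarrow> nat set set \<Rightarrow> bool" where
  "is_F2_poly_rep n f M \<longleftrightarrow> M \<subseteq> Pow {..<n} \<and>
     (\<forall>x. f x = odd (card {S \<in> M. \<forall>i\<in>S. x i}))"

definition maximal_monomial :: "nat set set \<Rightarrow> nat set \<Rightarrow> bool" where
  "maximal_monomial M S \<longleftrightarrow> S \<in> M \<and> (\<forall>T\<in>M. T \<noteq> S \<longrightarrow> \<not> S \<subseteq> T)"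

definition restrict_fun :: "((nat \<Rightarrow> bool) \<Rightarrow> bool) \<Rightarrow> nat set \<Rightarrow> (nat \<Rightarrow> bool) \<Rightarrow> (nat \<Rightarrow> bool) \<Rightarrow> bool" where
  "restrict_fun f S \<xi> = (\<lambda>x. f (\<lambda>i. if i \<in> S then \<xi> i else x i))"

end

theory Submission
  imports Defs
begin

text \<open>Summing a function over \<open>\<mathbb>F\<^sub>2\<close> across the subcube of points that agree with \<open>y\<close>
  outside \<open>S\<close> kills every monomial not containing \<open>S\<close>; for a maximal monomial \<open>S\<close> only \<open>S\<close>
  itself survives, so this sum is \<open>1\<close> for every \<open>y\<close>. If the path that some \<open>y\<close> follows in a decision
  tree for \<open>f\<close> never queried a variable of \<open>S\<close>, \<open>f\<close> would be constant on that subcube and the sum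
  would be \<open>0\<close>. So every path queries \<open>S\<close>, and fixing the variables of \<open>S\<close> removes at least one
  query from every path.\<close>

definition subcube_parity :: "nat set \<Rightarrow> ((nat \<Rightarrow> bool) \<Rightarrow> bool) \<Rightarrow> (nat \<Rightarrow> bool) \<Rightarrow> bool" where
  "subcube_parity S f y \<longleftrightarrow> odd (card {A \<in> Pow S. restrict_fun f S (\<lambda>i. i \<in> A) y})"

lemma subcube_parity_F2_sum:
  assumes "finite M" "finite S"
  shows "subcube_parity S (\<lambda>x. odd (card {T \<in> M. \<forall>i\<in>T. x i})) y \<longleftrightarrow>
    odd (card {T \<in> M. subcube_parity S (\<lambda>x. \<forall>i\<in>T. x i) y})"
proof -
  let ?Q = "\<lambda>A T. restrict_fun (\<lambda>x. \<forall>i\<in>T. x i) S (\<lambda>i. i \<in> A) y"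
  have count: "card {b \<in> B. P b} = (\<Sum>b\<in>B. of_bool (P b))" if "finite B" for B :: "'a set" and P
    using that by (simp add: Int_def)
  have "(\<Sum>A\<in>Pow S. card {T \<in> M. ?Q A T}) = (\<Sum>A\<in>Pow S. \<Sum>T\<in>M. of_bool (?Q A T))"
    by (intro sum.cong refl count assms(1))
  also have "\<dots> = (\<Sum>T\<in>M. \<Sum>A\<in>Pow S. of_bool (?Q A T))"
    by (rule sum.swap)
  also have "\<dots> = (\<Sum>T\<in>M. card {A \<in> Pow S. ?Q A T})"
    using assms(2) by (intro sum.cong refl count[symmetric]) simp
  finally have "even (\<Sum>A\<in>Pow S. card {T \<in> M. ?Q A T}) \<longleftrightarrow> even (\<Sum>T\<in>M. card {A \<in> Pow S. ?Q A T})"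
    by (simp only:)
  moreover have "restrict_fun (\<lambda>x. odd (card {T \<in> M. \<forall>i\<in>T. x i})) S (\<lambda>i. i \<in> A) y \<longleftrightarrow>
      odd (card {T \<in> M. ?Q A T})" for A
    by (simp add: restrict_fun_def)
  ultimately show ?thesis
    using assms unfolding subcube_parity_def by (simp only: even_sum_iff finite_Pow_iff)
qed

lemma subcube_parity_monomial:
  assumes "finite S"
  shows "subcube_parity S (\<lambda>x. \<forall>i\<in>T. x i) y \<longleftrightarrow> S \<subseteq> T \<and> (\<forall>i\<in>T - S. y i)"
proof (cases "\<forall>i\<in>T - S. y i")
  case False
  then have none: "{A \<in> Pow S. restrict_fun (\<lambda>x. \<forall>i\<in>T. x i) S (\<lambda>i. i \<in> A) y} = {}"
    by (auto simp: restrict_fun_def)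
  show ?thesis
    using False unfolding subcube_parity_def none by simp
next
  case True
  have "{A \<in> Pow S. restrict_fun (\<lambda>x. \<forall>i\<in>T. x i) S (\<lambda>i. i \<in> A) y} = (\<union>) (T \<inter> S) ` Pow (S - T)"
  proof (intro equalityI subsetI)
    fix A
    assume "A \<in> {A \<in> Pow S. restrict_fun (\<lambda>x. \<forall>i\<in>T. x i) S (\<lambda>i. i \<in> A) y}"
    then have "A = (T \<inter> S) \<union> (A - T)" "A - T \<in> Pow (S - T)"
      by (auto simp: restrict_fun_def)
    then show "A \<in> (\<union>) (T \<inter> S) ` Pow (S - T)"
      by blast
  qed (use True in \<open>auto simp: restrict_fun_def\<close>)
  moreover have "inj_on ((\<union>) (T \<inter> S)) (Pow (S - T))"
    by (rule inj_onI) blast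
  ultimately have "card {A \<in> Pow S. restrict_fun (\<lambda>x. \<forall>i\<in>T. x i) S (\<lambda>i. i \<in> A) y} = 2 ^ card (S - T)"
    using assms by (simp add: card_image card_Pow)
  moreover have "card (S - T) = 0 \<longleftrightarrow> S \<subseteq> T"
    using assms by auto
  ultimately show ?thesis
    using True unfolding subcube_parity_def by simp
qed

lemma subcube_parity_maximal_monomial:
  assumes "is_F2_poly_rep n f M" "maximal_monomial M S"
  shows "subcube_parity S f y"
proof -
  have M: "M \<subseteq> Pow {..<n}" and f: "f = (\<lambda>x. odd (card {T \<in> M. \<forall>i\<in>T. x i}))"
    using assms(1) by (auto simp: is_F2_poly_rep_def)
  have "finite M"
    using M finite_subset by blast
  moreover have "finite S"
    using assms(2) M by (auto simp: maximal_monomial_def intro: finite_subset)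
  moreover have "{T \<in> M. subcube_parity S (\<lambda>x. \<forall>i\<in>T. x i) y} = {S}"
    using assms(2) \<open>finite S\<close> by (auto simp: maximal_monomial_def subcube_parity_monomial)
  ultimately show ?thesis
    unfolding f by (simp add: subcube_parity_F2_sum)
qed

lemma subcube_parity_empty: "subcube_parity {} f y \<longleftrightarrow> f y"
proof -
  have "{A \<in> Pow {}. restrict_fun f {} (\<lambda>i. i \<in> A) y} = (if f y then {{}} else {})"
    by (auto simp: restrict_fun_def)
  then show ?thesis
    unfolding subcube_parity_def by simp
qed

lemma not_subcube_parity_if_constant:
  assumes "finite S" "S \<noteq> {}" "\<And>x. (\<And>i. i \<notin> S \<Longrightarrow> x i = y i) \<Longrightarrow> f x = b"
  shows "\<not> subcube_parity S f y"
proof -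
  have "{A \<in> Pow S. restrict_fun f S (\<lambda>i. i \<in> A) y} = (if b then Pow S else {})"
    using assms(3) by (auto simp: restrict_fun_def)
  moreover have "card S > 0"
    using assms(1,2) by (simp add: card_gt_0_iff)
  ultimately show ?thesis
    using assms(1) by (simp add: subcube_parity_def card_Pow)
qed

text \<open>A tree may query a variable again below a node that already queried it; the partial
  assignment \<open>\<rho>\<close> records the answers so far, so that such inconsistent branches are pruned.\<close>

fun dt_restrict :: "(nat \<rightharpoonup> bool) \<Rightarrow> dtree \<Rightarrow> dtree" where
  "dt_restrict \<rho> (Leaf b) = Leaf b"
| "dt_restrict \<rho> (Node i t0 t1) =
    (case \<rho> i of
      Some v \<Rightarrow> if v then dt_restrict \<rho> t1 else dt_restrict \<rho> t0
    | None \<Rightarrow> Node i (dt_restrict (\<rho>(i \<mapsto> False)) t0) (dt_restrict (\<rho>(i \<mapsto> True)) t1))"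

lemma dt_eval_dt_restrict:
  "dt_eval (dt_restrict \<rho> T) x = dt_eval T (\<lambda>i. case \<rho> i of Some v \<Rightarrow> v | None \<Rightarrow> x i)"
proof (induction T arbitrary: \<rho>)
  case (Node i t0 t1)
  show ?case
  proof (cases "\<rho> i")
    case None
    have "(\<lambda>j. case (\<rho>(i \<mapsto> x i)) j of Some v \<Rightarrow> v | None \<Rightarrow> x j) =
          (\<lambda>j. case \<rho> j of Some v \<Rightarrow> v | None \<Rightarrow> x j)"
      using None by auto
    with None Node.IH show ?thesis
      by (cases "x i") auto
  qed (use Node.IH in auto)
qed simp

lemma dt_vars_dt_restrict: "dt_vars (dt_restrict \<rho> T) \<subseteq> dt_vars T"
proof (induction T arbitrary: \<rho>)
  case (Node i t0 t1)
  then show ?case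
    by (cases "\<rho> i") auto
qed simp

lemma dt_depth_dt_restrict_le: "dt_depth (dt_restrict \<rho> T) \<le> dt_depth T"
proof (induction T arbitrary: \<rho>)
  case (Node i t0 t1)
  have "dt_depth (dt_restrict \<rho>' t) \<le> dt_depth (Node i t0 t1)" if "t \<in> {t0, t1}" for \<rho>' t
    using that Node.IH[of \<rho>'] by (auto intro: le_SucI max.coboundedI1 max.coboundedI2)
  moreover have "dt_depth (Node i (dt_restrict \<rho>0 t0) (dt_restrict \<rho>1 t1)) \<le> dt_depth (Node i t0 t1)"
    for \<rho>0 \<rho>1
    using Node.IH[of \<rho>0] Node.IH[of \<rho>1] by (auto intro: max.coboundedI1 max.coboundedI2)
  ultimately show ?case
    by (cases "\<rho> i") auto
qed simp

fun dt_path_queries :: "nat set \<Rightarrow> dtree \<Rightarrow> (nat \<Rightarrow> bool) \<Rightarrow> bool" where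
  "dt_path_queries S (Leaf b) x \<longleftrightarrow> False"
| "dt_path_queries S (Node i t0 t1) x \<longleftrightarrow> i \<in> S \<or> dt_path_queries S (if x i then t1 else t0) x"

lemma dt_eval_eq_if_not_dt_path_queries:
  assumes "\<not> dt_path_queries S T x" "\<And>i. i \<notin> S \<Longrightarrow> x' i = x i"
  shows "dt_eval T x' = dt_eval T x"
  using assms(1) by (induction T) (auto simp: assms(2))

lemma dt_depth_dt_restrict_less:
  assumes "S \<subseteq> dom \<rho>" "\<And>x. \<rho> \<subseteq>\<^sub>m Some \<circ> x \<Longrightarrow> dt_path_queries S T x"
  shows "dt_depth (dt_restrict \<rho> T) < dt_depth T"
  using assms
proof (induction T arbitrary: \<rho>)
  case (Leaf b)
  have "\<rho> \<subseteq>\<^sub>m Some \<circ> (\<lambda>i. case \<rho> i of Some v \<Rightarrow> v | None \<Rightarrow> False)"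
    by (auto simp: map_le_def)
  with Leaf.prems(2) show ?case by fastforce
next
  case (Node i t0 t1)
  show ?case
  proof (cases "\<rho> i")
    case (Some v)
    then show ?thesis
      using dt_depth_dt_restrict_le[of \<rho> t0] dt_depth_dt_restrict_le[of \<rho> t1] by auto
  next
    case None
    have paths: "dt_path_queries S (if v then t1 else t0) x" if "\<rho>(i \<mapsto> v) \<subseteq>\<^sub>m Some \<circ> x" for v x
    proof -
      have "\<rho> \<subseteq>\<^sub>m \<rho>(i \<mapsto> v)"
        using None by (auto simp: map_le_def)
      then have "dt_path_queries S (Node i t0 t1) x"
        using Node.prems(2) map_le_trans[OF _ that(1)] by blast
      moreover have "Some (x i) = Some v"
        using that(1) unfolding map_le_def by (metis comp_apply domI fun_upd_same)
      moreover have "i \<notin> S"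
        using None Node.prems(1) by auto
      ultimately show ?thesis
        by auto
    qed
    have dom: "S \<subseteq> dom (\<rho>(i \<mapsto> v))" for v
      using Node.prems(1) by auto
    have "dt_depth (dt_restrict (\<rho>(i \<mapsto> False)) t0) < dt_depth t0"
      using Node.IH(1)[OF dom paths[of False, simplified]] .
    moreover have "dt_depth (dt_restrict (\<rho>(i \<mapsto> True)) t1) < dt_depth t1"
      using Node.IH(2)[OF dom paths[of True, simplified]] .
    ultimately show ?thesis
      using None by auto
  qed
qed

lemma restrict_fun_dt_eval:
  "restrict_fun (dt_eval T) S \<xi> = dt_eval (dt_restrict ((Some \<circ> \<xi>) |` S) T)"
proof -
  have "(\<lambda>i. case ((Some \<circ> \<xi>) |` S) i of Some v \<Rightarrow> v | None \<Rightarrow> x i) = (\<lambda>i. if i \<in> S then \<xi> i else x i)"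
    for x
    by (auto simp: restrict_map_def)
  then show ?thesis
    unfolding restrict_fun_def by (intro ext) (simp only: dt_eval_dt_restrict)
qed

lemma dt_depth_dt_restrict_less_if_subcube_parity:
  assumes "finite S" "S \<noteq> {}" "\<And>y. subcube_parity S (dt_eval T) y"
  shows "dt_depth (dt_restrict ((Some \<circ> \<xi>) |` S) T) < dt_depth T"
proof (rule dt_depth_dt_restrict_less)
  show "S \<subseteq> dom ((Some \<circ> \<xi>) |` S)"
    by (auto simp: restrict_map_def)
  show "dt_path_queries S T x" for x
    using dt_eval_eq_if_not_dt_path_queries not_subcube_parity_if_constant[OF assms(1,2)] assms(3)
    by metis
qed

theorem mainTheorem14:
  fixes n d :: nat and f :: "(nat \<Rightarrow> bool) \<Rightarrow> bool" and M :: "nat set set" and S :: "nat set"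
  assumes "d \<ge> 1"
    and "is_depth_dt n d f"
    and "is_F2_poly_rep n f M"
    and "maximal_monomial M S"
  shows "\<forall>\<xi> :: nat \<Rightarrow> bool. is_depth_dt n (d - 1) (restrict_fun f S \<xi>)"
proof
  fix \<xi> :: "nat \<Rightarrow> bool"
  obtain T where T: "dt_vars T \<subseteq> {..<n}" "dt_depth T \<le> d" "dt_eval T = f"
    using assms(2) by (auto simp: is_depth_dt_def)
  have parity: "\<And>y. subcube_parity S f y"
    using assms(3,4) by (rule subcube_parity_maximal_monomial)
  show "is_depth_dt n (d - 1) (restrict_fun f S \<xi>)"
  proof (cases "S = {}")
    case True
    then have "restrict_fun f S \<xi> = dt_eval (Leaf True)"
      using parity by (auto simp: subcube_parity_empty restrict_fun_def)
    then show ?thesis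
      unfolding is_depth_dt_def by (intro exI[of _ "Leaf True"]) simp
  next
    case False
    let ?T = "dt_restrict ((Some \<circ> \<xi>) |` S) T"
    have "finite S"
      using assms(3,4) by (auto simp: maximal_monomial_def is_F2_poly_rep_def intro: finite_subset)
    then have "dt_depth ?T < dt_depth T"
      using False parity T(3) by (intro dt_depth_dt_restrict_less_if_subcube_parity) auto
    then have "dt_depth ?T \<le> d - 1"
      using T(2) by linarith
    moreover have "dt_vars ?T \<subseteq> {..<n}"
      using T(1) dt_vars_dt_restrict by blast
    moreover have "dt_eval ?T = restrict_fun f S \<xi>"
      unfolding T(3)[symmetric] by (rule restrict_fun_dt_eval[symmetric])
    ultimately show ?thesis
      unfolding is_depth_dt_def by blast
  qed
qed

end
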